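(* Let $(X,d,\mu)$ be a metric measure space satisfying $\mathrm{BG}(k,n)$ with constant $C$ for some $k\in\mathbb{R}$, $n\ge1$, $1\le C<\sqrt2$, let $R>0$ and let $\delta=\delta(k,n,C,R)>0$ be the constant such that for every $r$-cut point $x$ with $0<r\le R$ and every connected component $O$ of $\overline B_r(x)\setminus\{x\}$ one has $\mathrm{diam}(O\cap S_r(x))\le(2-\delta)r$. Let $x_1,x_2,x_3\in X$ be $r$-cut points with $0<r\le R$ (each has degree $2$), labeled so that $x_2,x_3$ lie in the same connected component $O_1'$ of $\overline B_r(x_1)\setminus\{x_1\}$ and $d(x_1,x_2)<d(x_1,x_3)$. For $i=2,3$ let $O_i$ be the connected component of $\overline B_r(x_i)\setminus\{x_i\}$ containing $x_1$ and $O_i'$ the other component. If $d(x_i,x_j)<\delta r/6$ for all $1\le i,j\le3$, then $O_2'\cap O_3'\ne\emptyset$ (that is, $\{x_1,x_2,x_3\}$ stands in a line).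
   Context: A metric measure space $(X,d,\mu)$ means a complete, locally compact length space $(X,d)$ equipped with a Borel measure $\mu$. $B_r(x)$ and $\overline B_r(x)$ denote the open and closed balls of radius $r$ about $x$, and $S_r(x)=\{y: d(x,y)=r\}$. For $k\in\mathbb{R}$ let $\mathsf s_k(t)=\sin(\sqrt{k}\,t)/\sqrt{k}$ if $k>0$, $\mathsf s_k(t)=t$ if $k=0$, $\mathsf s_k(t)=\sinh(\sqrt{-k}\,t)/\sqrt{-k}$ if $k<0$. For real $n\ge1$ and $0\le r_1<r_2$ set $V_{k,n}(r_1,r_2)=\alpha_{n-1}\int_{r_1}^{r_2}\mathsf s_k(t)^{n-1}\,dt$ with $\alpha_{n-1}=2\pi^{n/2}/\Gamma(n/2)$. For $x\in X$ let $A_{r_1,r_2}(x)=B_{r_2}(x)\setminus\overline B_{r_1}(x)$ and $A_{0,r}(x)=B_r(x)$. For a measurable $U\subset A_{r_1,r_2}(x)$ and $0\le s_1<s_2$ with $s_1\le r_1$, $s_2\le r_2$, let $S_{s_1,s_2}(x,U)=\{y\in A_{s_1,s_2}(x): d(x,y)+d(y,z)=d(x,z)\text{ for some }z\in U\}$. $(X,d,\mu)$ satisfies $\mathrm{BG}(k,n)$ with constant $C\ge1$ if for every $x\in X$, all $0\le r_1<r_2$, $0\le s_1<s_2$ with $s_1\le r_1$, $s_2\le r_2$, and every measurable $U\subset A_{r_1,r_2}(x)$, one has $\mu(U)/\mu(S_{s_1,s_2}(x,U))\le C\,V_{k,n}(r_1,r_2)/V_{k,n}(s_1,s_2)$. The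 degree $\deg(x)$ is the supremum, over all connected neighborhoods $U$ of $x$, of the number of connected components of $U\setminus\{x\}$. For $r>0$, a point $x$ is an $r$-cut point if: (i) $\overline B_r(x)\setminus\{x\}$ is disconnected; (ii) the number of connected components of $\overline B_r(x)\setminus\{x\}$ equals $\deg(x)$; (iii) $O\cap S_r(x)\ne\emptyset$ for every connected component $O$ of $\overline B_r(x)\setminus\{x\}$. *)

theory Defs
  imports "HOL-Analysis.Analysis" "HOL-Library.Extended_Nat"
begin

definition curve_length_le :: "(real \<Rightarrow> 'a::metric_space) \<Rightarrow> real \<Rightarrow> bool" where
  "curve_length_le \<gamma> L \<longleftrightarrow>
     (\<forall>(m::nat) (t::nat \<Rightarrow> real). 0 \<le> t 0 \<and> t m \<le> 1 \<and> (\<forall>i<m. t i \<le> t (Suc i)) \<longrightarrow>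
        (\<Sum>i<m. dist (\<gamma> (t i)) (\<gamma> (t (Suc i)))) \<le> L)"

definition length_space :: "'a::metric_space itself \<Rightarrow> bool" where
  "length_space _ \<longleftrightarrow>
     (\<forall>(x::'a) y \<epsilon>. \<epsilon> > 0 \<longrightarrow>
        (\<exists>\<gamma>. continuous_on {0..1} \<gamma> \<and> \<gamma> 0 = x \<and> \<gamma> 1 = y \<and> curve_length_le \<gamma> (dist x y + \<epsilon>)))"

definition mms :: "'a::metric_space measure \<Rightarrow> bool" where
  "mms \<mu> \<longleftrightarrow> complete (UNIV::'a set) \<and> locally compact (UNIV::'a set)
              \<and> length_space TYPE('a) \<and> sets \<mu> = sets borel"

definition sk :: "real \<Rightarrow> real \<Rightarrow> real" where
  "sk k t = (if k > 0 then sin (sqrt k * t) / sqrt k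
             else if k = 0 then t else sinh (sqrt (-k) * t) / sqrt (-k))"

definition alpha :: "real \<Rightarrow> real" where
  "alpha m = 2 * pi powr ((m + 1) / 2) / Gamma ((m + 1) / 2)"

definition Vkn :: "real \<Rightarrow> real \<Rightarrow> real \<Rightarrow> real \<Rightarrow> real" where
  "Vkn k n r1 r2 = alpha (n - 1) *
     integral {r1..r2} (\<lambda>t. if sk k t > 0 then sk k t powr (n - 1) else 0)"

definition annulus :: "'a::metric_space \<Rightarrow> real \<Rightarrow> real \<Rightarrow> 'a set" where
  "annulus x r1 r2 = (if r1 = 0 then ball x r2 else ball x r2 - cball x r1)"

definition Sset :: "'a::metric_space \<Rightarrow> real \<Rightarrow> real \<Rightarrow> 'a set \<Rightarrow> 'a set" where
  "Sset x s1 s2 U = {y \<in> annulus x s1 s2. \<exists>z\<in>U. dist x y + dist y z = dist x z}"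

definition BG :: "real \<Rightarrow> real \<Rightarrow> real \<Rightarrow> 'a::metric_space measure \<Rightarrow> bool" where
  "BG k n C \<mu> \<longleftrightarrow> C \<ge> 1 \<and>
     (\<forall>x r1 r2 s1 s2 U. 0 \<le> r1 \<and> r1 < r2 \<and> 0 \<le> s1 \<and> s1 < s2 \<and> s1 \<le> r1 \<and> s2 \<le> r2
        \<and> U \<in> sets \<mu> \<and> U \<subseteq> annulus x r1 r2 \<longrightarrow>
        emeasure \<mu> U / emeasure \<mu> (Sset x s1 s2 U)
          \<le> ennreal (C * Vkn k n r1 r2 / Vkn k n s1 s2))"

definition ncomp :: "'a::topological_space set \<Rightarrow> enat" where
  "ncomp S = (if finite (components S) then enat (card (components S)) else \<infinity>)"

definition deg :: "'a::topological_space \<Rightarrow> enat" where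
  "deg x = (SUP U \<in> {U. connected U \<and> (\<exists>V. open V \<and> x \<in> V \<and> V \<subseteq> U)}. ncomp (U - {x}))"

definition cut_point :: "real \<Rightarrow> 'a::metric_space \<Rightarrow> bool" where
  "cut_point r x \<longleftrightarrow>
     \<not> connected (cball x r - {x}) \<and>
     ncomp (cball x r - {x}) = deg x \<and>
     (\<forall>W\<in>components (cball x r - {x}). W \<inter> sphere x r \<noteq> {})"

end

theory Submission
  imports Defs
begin

text \<open>
  Closed balls of a complete, locally compact length space are compact, so boundary bumping
  applies inside them. Hence, at an r-cut point x, every component of the punctured ball
  cball x r - {x} reaches each sphere of radius 0 < \<rho> \<le> r. Since deg x bounds the number of
  components of cball x \<rho> - {x}, these are exactly the traces of the components at radius r,
  and x is also a \<rho>-cut point.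

  For the corollary take \<rho> = r/2. The closure of the component O2' of cball x2 r - {x2} avoiding
  x1 contains x2, which lies inside the sphere of radius \<rho> about x1, and O2' reaches distance r
  from x2; so O2' crosses that sphere, within the component of cball x1 \<rho> - {x1} containing x2,
  at a point p of O1'. Likewise O3' crosses it at a point q of O1'. The diameter bound at
  x1 and radius \<rho> gives d(p,q) \<le> (2 - \<delta>)\<rho>, which is short enough for a nearly minimising
  curve from p to q to stay inside cball x2 r - {x2}; hence q \<in> O2'.
\<close>

section \<open>Components\<close>

lemma connected_components_of_top_of_set:
  "connected_components_of (top_of_set S) = components S"
proof -
  have "connected_component_of (top_of_set S) x y \<longleftrightarrow> connected_component S x y" for x y
    unfolding connected_component_of_def connected_component_def
    by (auto simp: connectedin_subtopology)
  then show ?thesis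
    unfolding connected_components_of_def components_def by (auto simp: fun_eq_iff)
qed

lemma component_meets_closure_complement:
  fixes K A :: "'a::metric_space set"
  assumes "compact K" "connected K" "closed A" "A \<subseteq> K" "A \<noteq> K" "C \<in> components A"
  shows "C \<inter> closure (K - A) \<noteq> {}"
proof -
  let ?X = "top_of_set K"
  have "C \<inter> ?X frontier_of A \<noteq> {}"
    by (rule boundary_bumping_theorem_closed)
      (use assms in \<open>auto simp: connected_space_subtopology compact_space_subtopology
        Hausdorff_space_subtopology closed_subset subtopology_subtopology Int_absorb1
        connected_components_of_top_of_set\<close>)
  moreover have "?X frontier_of A \<subseteq> closure (K - A)"
    by (simp add: frontier_of_closures closure_of_subtopology Int_Diff[symmetric] le_infI2)
  ultimately show ?thesis
    by blast
qed

lemma closure_component_delete_subset: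
  assumes "closed S" "C \<in> components (S - {c})"
  shows "closure C \<subseteq> C \<union> {c}"
proof -
  obtain T where T: "closed T" "C = (S - {c}) \<inter> T"
    using closedin_component[OF assms(2)] by (auto simp: closedin_closed)
  have "closure C \<subseteq> T \<inter> S"
    using T assms(1) by (intro closure_minimal) auto
  with T show ?thesis
    by blast
qed

lemma connected_iff_card_components_le_1:
  assumes "finite (components S)"
  shows "connected S \<longleftrightarrow> card (components S) \<le> 1"
  using assms by (simp add: connected_eq_connected_components_eq card_le_Suc0_iff_eq)

lemma components_eq_connected_component_set:
  "C \<in> components S \<Longrightarrow> x \<in> C \<Longrightarrow> C = connected_component_set S x"
  by (metis components_iff connected_component_eq)

lemma UN_connected_component_set_subset:
  assumes "S \<subseteq> T" "z \<in> S"
  shows "(\<Union>w\<in>connected_component_set S z. connected_component_set T w) = connected_component_set T z"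
proof -
  have "connected_component_set T w = connected_component_set T z"
    if "w \<in> connected_component_set S z" for w
  proof (rule connected_component_eq)
    show "w \<in> connected_component_set T z"
      using connected_component_mono[OF assms(1)] that by blast
  qed
  then have "(\<Union>w\<in>connected_component_set S z. connected_component_set T w)
      = (\<Union>w\<in>connected_component_set S z. connected_component_set T z)"
    by (rule SUP_cong[OF refl])
  also have "\<dots> = connected_component_set T z"
    using assms(2) connected_component_eq_empty[of S z] by (intro SUP_const) blast
  finally show ?thesis .
qed

lemma inj_on_UN_connected_component_set:
  fixes S T :: "'a::topological_space set"
  assumes "S \<subseteq> T" "finite (components S)" "card (components S) \<le> card (components T)"
    and meets: "\<And>W. W \<in> components T \<Longrightarrow> W \<inter> S \<noteq> {}"
  shows "inj_on (\<lambda>V. \<Union>w\<in>V. connected_component_set T w) (components S)"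
proof -
  let ?\<phi> = "\<lambda>V. \<Union>w\<in>V. connected_component_set T w"
  have "?\<phi> ` components S = components T"
  proof
    show "?\<phi> ` components S \<subseteq> components T"
      using UN_connected_component_set_subset[OF assms(1)] assms(1)
      by (auto elim!: componentsE intro!: componentsI)
    show "components T \<subseteq> ?\<phi> ` components S"
    proof
      fix W assume W: "W \<in> components T"
      then obtain z where z: "z \<in> W" "z \<in> S"
        using meets by blast
      then have "W = ?\<phi> (connected_component_set S z)"
        using components_eq_connected_component_set[OF W z(1)]
          UN_connected_component_set_subset[OF assms(1) z(2)] by simp
      with z show "W \<in> ?\<phi> ` components S"
        by (blast intro: componentsI)
    qed
  qed
  with assms(2,3) show ?thesis
    by (metis card_image_le eq_card_imp_inj_on le_antisym)
qed

lemma connected_component_set_Int_eq: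
  fixes S T :: "'a::topological_space set"
  assumes "S \<subseteq> T" "finite (components S)" "card (components S) \<le> card (components T)"
    and "\<And>W. W \<in> components T \<Longrightarrow> W \<inter> S \<noteq> {}"
    and "y \<in> S"
  shows "connected_component_set T y \<inter> S = connected_component_set S y"
proof
  show "connected_component_set S y \<subseteq> connected_component_set T y \<inter> S"
    using connected_component_mono[OF assms(1)] connected_component_subset by blast
  show "connected_component_set T y \<inter> S \<subseteq> connected_component_set S y"
  proof
    fix z assume z: "z \<in> connected_component_set T y \<inter> S"
    then have "connected_component_set T z = connected_component_set T y"
      using connected_component_eq[of z T y] by blast
    then have "(\<Union>w\<in>connected_component_set S z. connected_component_set T w)
        = (\<Union>w\<in>connected_component_set S y. connected_component_set T w)"
      using UN_connected_component_set_subset[OF assms(1)] z assms(5) by simp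
    moreover have "connected_component_set S z \<in> components S"
      using z by (simp add: componentsI)
    moreover have "connected_component_set S y \<in> components S"
      using assms(5) by (rule componentsI)
    ultimately have "connected_component_set S z = connected_component_set S y"
      using inj_onD[OF inj_on_UN_connected_component_set[OF assms(1-4)]] by blast
    moreover have "z \<in> connected_component_set S z"
      using z by simp
    ultimately show "z \<in> connected_component_set S y"
      by simp
  qed
qed

lemma bij_betw_components_Int:
  fixes S T :: "'a::topological_space set"
  assumes "S \<subseteq> T" "finite (components S)" "card (components S) \<le> card (components T)"
    and meets: "\<And>W. W \<in> components T \<Longrightarrow> W \<inter> S \<noteq> {}"
  shows "bij_betw (\<lambda>W. W \<inter> S) (components T) (components S)"
proof -
  have trace: "W \<inter> S = connected_component_set S y"
    if "W \<in> components T" "y \<in> W" "y \<in> S" for W y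
    using components_eq_connected_component_set[OF that(1,2)]
      connected_component_set_Int_eq[OF assms that(3)] by simp
  have "inj_on (\<lambda>W. W \<inter> S) (components T)"
  proof (rule inj_onI)
    fix W W' assume W: "W \<in> components T" "W' \<in> components T" and "W \<inter> S = W' \<inter> S"
    with meets[OF W(1)] have "W \<inter> W' \<noteq> {}"
      by blast
    with W show "W = W'"
      by (simp add: components_eq)
  qed
  moreover have "(\<lambda>W. W \<inter> S) ` components T \<subseteq> components S"
  proof
    fix V assume "V \<in> (\<lambda>W. W \<inter> S) ` components T"
    then obtain W where W: "W \<in> components T" "V = W \<inter> S"
      by blast
    with meets obtain y where "y \<in> W" "y \<in> S"
      by blast
    with W trace show "V \<in> components S"
      by (simp add: componentsI)
  qed
  moreover have "components S \<subseteq> (\<lambda>W. W \<inter> S) ` components T"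
  proof
    fix V assume "V \<in> components S"
    then obtain v where v: "v \<in> S" "V = connected_component_set S v"
      by (rule componentsE)
    then have "V = connected_component_set T v \<inter> S"
      using trace[of "connected_component_set T v" v] assms(1) by (auto intro: componentsI)
    with v assms(1) show "V \<in> (\<lambda>W. W \<inter> S) ` components T"
      by (auto intro: componentsI)
  qed
  ultimately show ?thesis
    by (simp add: bij_betw_def subset_antisym)
qed

section \<open>Length spaces\<close>

lemma length_space_near_geodesic_path:
  fixes x y :: "'a::metric_space"
  assumes "length_space TYPE('a)" "\<eta> > 0"
  obtains \<gamma> :: "real \<Rightarrow> 'a" where "continuous_on {0..1} \<gamma>" "\<gamma> 0 = x" "\<gamma> 1 = y"
    "\<And>t. t \<in> {0..1} \<Longrightarrow> dist x (\<gamma> t) + dist (\<gamma> t) y \<le> dist x y + \<eta>"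
proof -
  obtain \<gamma> where \<gamma>: "continuous_on {0..1} \<gamma>" "\<gamma> 0 = x" "\<gamma> 1 = y"
    and len: "curve_length_le \<gamma> (dist x y + \<eta>)"
    using assms unfolding length_space_def by blast
  have "dist x (\<gamma> t) + dist (\<gamma> t) y \<le> dist x y + \<eta>" if "t \<in> {0..1}" for t
  proof -
    let ?t = "\<lambda>i::nat. if i = 0 then 0 else if i = 1 then t else 1"
    have "(\<Sum>i<2. dist (\<gamma> (?t i)) (\<gamma> (?t (Suc i)))) \<le> dist x y + \<eta>"
      using len that unfolding curve_length_le_def
      by (elim allE[of _ 2] allE[of _ ?t]) (auto simp: less_2_cases_iff)
    then show ?thesis using \<gamma> by (simp add: numeral_2_eq_2)
  qed
  with \<gamma> that show ?thesis by blast
qed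

lemma length_space_near_geodesic_continuum:
  fixes x y :: "'a::metric_space"
  assumes "length_space TYPE('a)" "\<eta> > 0"
  obtains T where "connected T" "x \<in> T" "y \<in> T"
    "\<And>z. z \<in> T \<Longrightarrow> dist x z + dist z y \<le> dist x y + \<eta>"
proof -
  obtain \<gamma> :: "real \<Rightarrow> 'a" where \<gamma>: "continuous_on {0..1} \<gamma>" "\<gamma> 0 = x" "\<gamma> 1 = y"
    "\<And>t. t \<in> {0..1} \<Longrightarrow> dist x (\<gamma> t) + dist (\<gamma> t) y \<le> dist x y + \<eta>"
    using length_space_near_geodesic_path[OF assms] by blast
  show ?thesis
  proof
    show "connected (\<gamma> ` {0..1})"
      using \<gamma>(1) connected_Icc connected_continuous_image by blast
    show "x \<in> \<gamma> ` {0..1}" "y \<in> \<gamma> ` {0..1}"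
      using \<gamma>(2,3) by force+
  qed (use \<gamma>(4) in auto)
qed

lemma length_space_intermediate_point:
  fixes x y :: "'a::metric_space"
  assumes "length_space TYPE('a)" "0 \<le> s" "s \<le> dist x y" "\<eta> > 0"
  obtains z where "dist x z \<le> s" "dist z y \<le> dist x y - s + \<eta>"
proof (cases "s = 0")
  case True
  with assms that show ?thesis by auto
next
  case False
  define \<eta>' where "\<eta>' = min \<eta> s"
  have \<eta>': "0 < \<eta>'" "\<eta>' \<le> s" "\<eta>' \<le> \<eta>"
    using False assms by (auto simp: \<eta>'_def)
  obtain \<gamma> :: "real \<Rightarrow> 'a" where \<gamma>: "continuous_on {0..1} \<gamma>" "\<gamma> 0 = x" "\<gamma> 1 = y"
    "\<And>t. t \<in> {0..1} \<Longrightarrow> dist x (\<gamma> t) + dist (\<gamma> t) y \<le> dist x y + \<eta>'"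
    using length_space_near_geodesic_path[OF assms(1) \<eta>'(1)] by blast
  have "continuous_on {0..1} (\<lambda>t. dist (\<gamma> t) y)"
    by (intro continuous_intros \<gamma>(1))
  then obtain t where t: "t \<in> {0..1}" "dist (\<gamma> t) y = dist x y - s + \<eta>'"
    using IVT2'[of "\<lambda>t. dist (\<gamma> t) y" 1 "dist x y - s + \<eta>'" 0] \<gamma>(2,3) \<eta>' assms(3)
    by auto
  show ?thesis
    using that[of "\<gamma> t"] \<gamma>(4)[OF t(1)] t(2) \<eta>' by auto
qed

lemma length_space_connected_ball:
  fixes x :: "'a::metric_space"
  assumes "length_space TYPE('a)"
  shows "connected (ball x s)"
proof -
  have "connected_component (ball x s) x y" if "y \<in> ball x s" for y
  proof -
    define \<eta> where "\<eta> = (s - dist x y) / 2"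
    have \<eta>: "0 < \<eta>" "dist x y + \<eta> < s"
      using that by (simp_all add: \<eta>_def field_simps)
    obtain T where T: "connected T" "x \<in> T" "y \<in> T"
      "\<And>z. z \<in> T \<Longrightarrow> dist x z + dist z y \<le> dist x y + \<eta>"
      using length_space_near_geodesic_continuum[OF assms \<eta>(1), of x y] by blast
    have "T \<subseteq> ball x s"
    proof
      fix z assume "z \<in> T"
      from T(4)[OF this] \<eta>(2) zero_le_dist[of z y] show "z \<in> ball x s"
        unfolding mem_ball by linarith
    qed
    with T show ?thesis
      unfolding connected_component_def by blast
  qed
  then have "connected_component_set (ball x s) x = ball x s"
    using connected_component_subset by blast
  then show ?thesis
    by (metis connected_connected_component)
qed

lemma length_space_connected_cball:
  fixes x :: "'a::metric_space"
  assumes "length_space TYPE('a)"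
  shows "connected (cball x s)"
proof (cases "s > 0")
  case False
  then have "cball x s = {} \<or> cball x s = {x}"
    by (cases "s = 0") auto
  then show ?thesis by auto
next
  case True
  have "y \<in> closure (ball x s)" if "y \<in> cball x s" for y
    unfolding closure_approachable
  proof (intro allI impI)
    fix e :: real assume "e > 0"
    define m where "m = min s e"
    have m: "0 < m" "m \<le> s" "m \<le> e"
      using \<open>e > 0\<close> True by (auto simp: m_def)
    show "\<exists>z\<in>ball x s. dist z y < e"
    proof (cases "dist x y < s")
      case True
      with \<open>e > 0\<close> show ?thesis by (intro bexI[of _ y]) auto
    next
      case False
      then obtain z where "dist x z \<le> s - m / 2" "dist z y \<le> dist x y - (s - m / 2) + m / 4"
        using length_space_intermediate_point[OF assms, of "s - m / 2" x y "m / 4"] m by auto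
      with m that show ?thesis by (intro bexI[of _ z]) auto
    qed
  qed
  then show ?thesis
    using connected_intermediate_closure[OF length_space_connected_ball[OF assms]]
    by (metis ball_subset_cball subsetI)
qed

lemma real_continuity_induct:
  fixes P :: "real \<Rightarrow> bool"
  assumes down: "\<And>t t'. t \<le> t' \<Longrightarrow> P t' \<Longrightarrow> P t" and "P 0"
    and limit: "\<And>\<rho>. 0 < \<rho> \<Longrightarrow> (\<And>t. t < \<rho> \<Longrightarrow> P t) \<Longrightarrow> P \<rho>"
    and step: "\<And>\<rho>. 0 \<le> \<rho> \<Longrightarrow> P \<rho> \<Longrightarrow> \<exists>\<eta>>0. P (\<rho> + \<eta>)"
  shows "P s"
proof (rule ccontr)
  assume "\<not> P s"
  then have bdd: "bdd_above (Collect P)"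
    using down by (metis bdd_aboveI mem_Collect_eq nle_le)
  obtain \<eta> where "\<eta> > 0" "P \<eta>"
    using step[OF order_refl \<open>P 0\<close>] by auto
  define \<rho> where "\<rho> = Sup (Collect P)"
  have "\<eta> \<le> \<rho>"
    unfolding \<rho>_def using \<open>P \<eta>\<close> bdd by (intro cSup_upper) auto
  have "P \<rho>"
  proof (rule limit)
    show "0 < \<rho>"
      using \<open>\<eta> > 0\<close> \<open>\<eta> \<le> \<rho>\<close> by simp
    show "P t" if t: "t < \<rho>" for t
    proof -
      obtain t' where "P t'" "t < t'"
        using less_cSupD[of "Collect P" t] t \<open>P \<eta>\<close> unfolding \<rho>_def by auto
      then show ?thesis
        using down[of t t'] by simp
    qed
  qed
  then obtain \<eta>' where "\<eta>' > 0" "P (\<rho> + \<eta>')"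
    using step \<open>\<eta> > 0\<close> \<open>\<eta> \<le> \<rho>\<close> by (meson less_le_trans less_imp_le)
  moreover have "\<rho> + \<eta>' \<le> \<rho>"
    unfolding \<rho>_def using \<open>P (\<rho> + \<eta>')\<close> bdd by (intro cSup_upper) (auto simp: \<rho>_def)
  ultimately show False
    by simp
qed

lemma compact_cball_of_compact_smaller:
  fixes x :: "'a::metric_space"
  assumes "complete (UNIV::'a set)" "length_space TYPE('a)" "0 < \<rho>"
    and smaller: "\<And>s. s < \<rho> \<Longrightarrow> compact (cball x s)"
  shows "compact (cball x \<rho>)"
  unfolding compact_eq_totally_bounded
proof (intro conjI allI impI)
  show "complete (cball x \<rho>)"
    using complete_closed_subset[OF closed_cball _ assms(1)] by blast
next
  fix e :: real assume "e > 0"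
  define s where "s = max 0 (\<rho> - e / 4)"
  have s: "0 \<le> s" "s < \<rho>" "\<rho> - e / 4 \<le> s"
    using \<open>e > 0\<close> \<open>0 < \<rho>\<close> by (auto simp: s_def)
  obtain k where k: "finite k" "cball x s \<subseteq> (\<Union>c\<in>k. ball c (e / 2))"
    using smaller[OF s(2)] \<open>e > 0\<close> unfolding compact_eq_totally_bounded
    by (meson half_gt_zero)
  have "cball x \<rho> \<subseteq> (\<Union>c\<in>k. ball c e)"
  proof
    fix y assume y: "y \<in> cball x \<rho>"
    obtain z where z: "dist x z \<le> s" "dist z y \<le> e / 2"
    proof (cases "dist x y \<le> s")
      case True
      with \<open>e > 0\<close> that[of y] show ?thesis by simp
    next
      case False
      then obtain z where "dist x z \<le> s" "dist z y \<le> dist x y - s + e / 4"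
        using length_space_intermediate_point[OF assms(2) s(1), of x y "e / 4"] \<open>e > 0\<close> by auto
      with y s(3) that show ?thesis
        by simp
    qed
    then obtain c where c: "c \<in> k" "dist c z < e / 2"
      using k(2) by fastforce
    have "dist c y \<le> dist c z + dist z y"
      by (rule dist_triangle)
    with c z(2) have "y \<in> ball c e"
      by simp
    with c(1) show "y \<in> (\<Union>c\<in>k. ball c e)"
      by blast
  qed
  with k(1) show "\<exists>k. finite k \<and> cball x \<rho> \<subseteq> (\<Union>c\<in>k. ball c e)"
    by blast
qed

lemma compact_neighbourhood_of_compact:
  fixes K :: "'a::metric_space set"
  assumes "locally compact (UNIV::'a set)" "compact K"
  obtains U L where "open U" "compact L" "K \<subseteq> U" "U \<subseteq> L"
proof -
  have "locally_compact_space (euclidean :: 'a topology)"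
    unfolding locally_compact_space_def
  proof
    fix y :: 'a
    obtain u v where "y \<in> u" "u \<subseteq> v" "openin (top_of_set UNIV) u" "compact v"
      using assms(1) unfolding locally_compact by (meson UNIV_I)
    then show "\<exists>U K. openin euclidean U \<and> compactin euclidean K \<and> y \<in> U \<and> U \<subseteq> K"
      by auto
  qed
  then obtain U L where "openin euclidean U" "compactin euclidean L" "K \<subseteq> U" "U \<subseteq> L"
    using assms(2) locally_compact_space_compact_closed_compact[of euclidean]
    by (metis Hausdorff_space_euclidean compactin_euclidean_iff)
  with that show ?thesis
    by simp
qed

lemma compact_cball_enlarge:
  fixes x :: "'a::metric_space"
  assumes "locally compact (UNIV::'a set)" "length_space TYPE('a)" "0 \<le> \<rho>"
    and "compact (cball x \<rho>)"
  obtains \<eta> where "\<eta> > 0" "compact (cball x (\<rho> + \<eta>))"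
proof -
  obtain U L where UL: "open U" "compact L" "cball x \<rho> \<subseteq> U" "U \<subseteq> L"
    using compact_neighbourhood_of_compact[OF assms(1,4)] by blast
  obtain e where e: "e > 0" "(\<Union>y\<in>cball x \<rho>. ball y e) \<subseteq> U"
    using compact_subset_open_imp_ball_epsilon_subset[OF assms(4) UL(1,3)] by blast
  have "cball x (\<rho> + e / 2) \<subseteq> U"
  proof
    fix z assume z: "z \<in> cball x (\<rho> + e / 2)"
    show "z \<in> U"
    proof (cases "dist x z \<le> \<rho>")
      case True
      with UL(3) show ?thesis by auto
    next
      case False
      then obtain y where y: "dist x y \<le> \<rho>" "dist y z \<le> dist x z - \<rho> + e / 4"
        using length_space_intermediate_point[OF assms(2,3), of x z "e / 4"] e(1) by auto
      with z e(1) have "z \<in> ball y e"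
        by simp
      moreover have "y \<in> cball x \<rho>"
        using y(1) by simp
      ultimately show ?thesis
        using e(2) by blast
    qed
  qed
  with UL(4) have "cball x (\<rho> + e / 2) = L \<inter> cball x (\<rho> + e / 2)"
    by blast
  then have "compact (cball x (\<rho> + e / 2))"
    using compact_Int_closed[OF UL(2) closed_cball] by metis
  with e(1) that[of "e / 2"] show ?thesis
    by simp
qed

theorem length_space_compact_cball:
  fixes x :: "'a::metric_space"
  assumes "complete (UNIV::'a set)" "locally compact (UNIV::'a set)" "length_space TYPE('a)"
  shows "compact (cball x s)"
proof (rule real_continuity_induct[where P = "\<lambda>t. compact (cball x t)"])
  show "compact (cball x t)" if "t \<le> t'" "compact (cball x t')" for t t'
  proof -
    have "cball x t = cball x t' \<inter> cball x t"
      using that(1) by auto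
    with that(2) show ?thesis
      by (metis closed_cball compact_Int_closed)
  qed
  show "compact (cball x \<rho>)" if "0 < \<rho>" "\<And>t. t < \<rho> \<Longrightarrow> compact (cball x t)" for \<rho>
    using compact_cball_of_compact_smaller[OF assms(1,3) that] .
  show "\<exists>\<eta>>0. compact (cball x (\<rho> + \<eta>))" if "0 \<le> \<rho>" "compact (cball x \<rho>)" for \<rho>
    using compact_cball_enlarge[OF assms(2,3) that] by blast
qed simp

section \<open>Punctured balls\<close>

lemma continuum_component_outside_ball_meets_sphere:
  fixes K :: "'a::metric_space set"
  assumes "compact K" "connected K" "y \<in> K" "z \<in> K" "dist x y < s" "s \<le> dist x z"
  shows "connected_component_set (K - ball x s) z \<inter> sphere x s \<noteq> {}"
proof -
  let ?A = "K - ball x s"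
  have "connected_component_set ?A z \<inter> closure (K - ?A) \<noteq> {}"
  proof (rule component_meets_closure_complement[OF assms(1,2)])
    show "closed ?A"
      using assms(1) by (simp add: compact_imp_closed closed_Diff)
    show "?A \<noteq> K"
      using assms(3,5) by auto
    show "connected_component_set ?A z \<in> components ?A"
      using assms(4,6) by (simp add: componentsI)
  qed blast
  moreover have "closure (K - ?A) \<subseteq> cball x s"
    by (rule closure_minimal) auto
  ultimately show ?thesis
    using connected_component_subset[of ?A z] by fastforce
qed

lemma continuum_component_in_cball_meets_sphere:
  fixes K :: "'a::metric_space set"
  assumes "compact K" "connected K" "c \<in> K" "u \<in> K" "dist x c \<le> \<rho>" "\<rho> < dist x u"
  shows "connected_component_set (K \<inter> cball x \<rho>) c \<inter> sphere x \<rho> \<noteq> {}"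
proof -
  let ?A = "K \<inter> cball x \<rho>"
  have "connected_component_set ?A c \<inter> closure (K - ?A) \<noteq> {}"
  proof (rule component_meets_closure_complement[OF assms(1,2)])
    show "closed ?A"
      using assms(1) by (simp add: compact_imp_closed closed_Int)
    show "?A \<noteq> K"
      using assms(4,6) by (metis IntD2 mem_cball not_le)
    show "connected_component_set ?A c \<in> components ?A"
      using assms(3,5) by (simp add: componentsI)
  qed blast
  moreover have "closure (K - ?A) \<subseteq> - ball x \<rho>"
    by (rule closure_minimal) (auto simp: open_ball)
  ultimately show ?thesis
    using connected_component_subset[of ?A c] by fastforce
qed

lemma component_punctured_cball_meets_sphere:
  fixes x :: "'a::metric_space"
  assumes "compact (cball x r)" "connected (cball x r)"
    and W: "W \<in> components (cball x r - {x})" "z \<in> W" and "0 < s" "s \<le> dist x z"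
  shows "W \<inter> sphere x s \<noteq> {}"
proof -
  let ?P = "connected_component_set (cball x r - ball x s) z"
  have "z \<in> cball x r"
    using W in_components_subset by blast
  then have "?P \<inter> sphere x s \<noteq> {}"
    using assms by (intro continuum_component_outside_ball_meets_sphere[of _ x]) auto
  moreover have "?P \<subseteq> W"
  proof (rule components_maximal[OF W(1)])
    show "?P \<subseteq> cball x r - {x}"
      using connected_component_subset \<open>0 < s\<close> by fastforce
    show "W \<inter> ?P \<noteq> {}"
      using W(2) \<open>z \<in> cball x r\<close> \<open>s \<le> dist x z\<close> by auto
  qed simp
  ultimately show ?thesis
    by blast
qed

lemma center_in_closure_component:
  fixes x :: "'a::metric_space"
  assumes "compact (cball x r)" "connected (cball x r)" "W \<in> components (cball x r - {x})"
  shows "x \<in> closure W"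
  unfolding closure_approachable
proof (intro allI impI)
  fix e :: real assume "e > 0"
  obtain z where z: "z \<in> W"
    using in_components_nonempty[OF assms(3)] by blast
  then have "0 < dist x z"
    using in_components_subset[OF assms(3)] by auto
  then obtain p where "p \<in> W" "dist x p = min (e / 2) (dist x z)"
    using component_punctured_cball_meets_sphere[OF assms z, of "min (e / 2) (dist x z)"] \<open>e > 0\<close>
    by auto
  moreover from this(2) \<open>e > 0\<close> have "dist p x < e"
    by (simp add: dist_commute)
  ultimately show "\<exists>p\<in>W. dist p x < e"
    by blast
qed

lemma component_punctured_cball_crosses_sphere:
  fixes c x :: "'a::metric_space"
  assumes "compact (cball c r)" "connected (cball c r)"
    and Q: "Q \<in> components (cball c r - {c})" "u \<in> Q"
    and x: "x \<notin> Q" "x \<noteq> c" "dist x c < \<rho>" "\<rho> < dist x u"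
  obtains p where "p \<in> Q" "dist x p = \<rho>" "p \<in> connected_component_set (cball x \<rho> - {x}) c"
proof -
  define K where "K = closure Q"
  have K_sub: "K \<subseteq> Q \<union> {c}"
    unfolding K_def by (rule closure_component_delete_subset[OF closed_cball Q(1)])
  have "K \<subseteq> cball c r"
    unfolding K_def using in_components_subset[OF Q(1)] by (intro closure_minimal) auto
  then have "compact K"
    using compact_Int_closed[OF assms(1), of K] by (simp add: K_def Int_absorb1)
  moreover have "connected K"
    unfolding K_def using in_components_connected[OF Q(1)] by (rule connected_imp_connected_closure)
  moreover have cK: "c \<in> K"
    using center_in_closure_component[OF assms(1,2) Q(1)] by (simp add: K_def)
  moreover have "u \<in> K"
    using Q(2) closure_subset by (auto simp: K_def)
  moreover have c\<rho>: "dist x c \<le> \<rho>"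
    using x(3) by simp
  ultimately have "connected_component_set (K \<inter> cball x \<rho>) c \<inter> sphere x \<rho> \<noteq> {}"
    by (rule continuum_component_in_cball_meets_sphere[OF _ _ _ _ _ x(4)])
  then obtain p where p: "p \<in> connected_component_set (K \<inter> cball x \<rho>) c" "p \<in> sphere x \<rho>"
    by blast
  let ?P = "connected_component_set (K \<inter> cball x \<rho>) c"
  have "?P \<subseteq> cball x \<rho> - {x}"
    using connected_component_subset[of "K \<inter> cball x \<rho>" c] K_sub x(1,2) by auto
  then have "?P \<subseteq> connected_component_set (cball x \<rho> - {x}) c"
    using cK c\<rho> by (intro connected_component_maximal) auto
  moreover have "p \<in> K" "p \<noteq> c"
    using p connected_component_subset x(3) by fastforce+
  with K_sub have "p \<in> Q"
    by blast
  moreover have "dist x p = \<rho>"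
    using p(2) by simp
  ultimately show ?thesis
    using that p(1) by blast
qed

lemma length_space_connected_component_punctured_cball:
  fixes y :: "'a::metric_space"
  assumes "length_space TYPE('a)"
    and "dist p q < dist y p + dist y q" "dist y p + dist y q + dist p q < 2 * r"
  shows "connected_component (cball y r - {y}) p q"
proof -
  define \<eta> where "\<eta> = min (dist y p + dist y q - dist p q) (2 * r - (dist y p + dist y q + dist p q)) / 2"
  have \<eta>: "0 < \<eta>" "dist p q + \<eta> < dist y p + dist y q" "dist y p + dist y q + dist p q + \<eta> < 2 * r"
    using assms(2,3) by (auto simp: \<eta>_def min_def field_simps)
  obtain T where T: "connected T" "p \<in> T" "q \<in> T"
    "\<And>z. z \<in> T \<Longrightarrow> dist p z + dist z q \<le> dist p q + \<eta>"
    using length_space_near_geodesic_continuum[OF assms(1) \<eta>(1)] by blast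
  have "T \<subseteq> cball y r - {y}"
  proof
    fix z assume "z \<in> T"
    note near = T(4)[OF this]
    have "dist y z \<le> dist y p + dist p z" "dist y z \<le> dist y q + dist z q"
      using dist_triangle dist_triangle2 by blast+
    with near \<eta>(3) have "dist y z \<le> r"
      by linarith
    moreover have "z \<noteq> y"
      using near \<eta>(2) by (auto simp: dist_commute)
    ultimately show "z \<in> cball y r - {y}"
      by simp
  qed
  with T show ?thesis
    unfolding connected_component_def by blast
qed

lemma finite_components_punctured_cball:
  fixes x :: "'a::metric_space"
  assumes LS: "length_space TYPE('a)" and "compact (cball x r)"
    and reach: "\<And>W. W \<in> components (cball x r - {x}) \<Longrightarrow> W \<inter> sphere x r \<noteq> {}"
  shows "finite (components (cball x r - {x}))"
proof (cases "r > 0")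
  case False
  then have "cball x r - {x} = {}"
    by (auto simp: not_less) (metis dist_le_zero_iff order.trans)
  then show ?thesis
    by (metis components_empty finite.emptyI)
next
  case True
  let ?C = "components (cball x r - {x})"
  have "\<exists>p. p \<in> W \<and> dist x p = r / 2" if W: "W \<in> ?C" for W
  proof -
    from reach[OF W] obtain z where "z \<in> W" "z \<in> sphere x r"
      by blast
    then have "W \<inter> sphere x (r / 2) \<noteq> {}"
      using component_punctured_cball_meets_sphere[OF assms(2) length_space_connected_cball[OF LS] W]
        True by simp
    then show ?thesis
      by auto
  qed
  then obtain p where p: "\<And>W. W \<in> ?C \<Longrightarrow> p W \<in> W" "\<And>W. W \<in> ?C \<Longrightarrow> dist x (p W) = r / 2"
    by metis
  have same: "W = W'" if "W \<in> ?C" "W' \<in> ?C" "dist (p W) (p W') < r / 4" for W W'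
  proof -
    have "connected_component (cball x r - {x}) (p W) (p W')"
      using that(3) p(2)[OF that(1)] p(2)[OF that(2)] True
      by (intro length_space_connected_component_punctured_cball[OF LS]) auto
    then have "p W' \<in> W"
      using that(1) p(1) components_eq_connected_component_set by fastforce
    with that(1,2) p(1) show ?thesis
      using components_eq by blast
  qed
  \<comment> \<open>points of distinct components on the sphere of radius r/2 are r/4 apart\<close>
  have "uniform_discrete (p ` ?C)"
    unfolding uniform_discrete_def using True same by (intro exI[of _ "r / 4"]) auto
  moreover have "p ` ?C \<subseteq> cball x r"
    using p(1) in_components_subset by blast
  ultimately have "finite (p ` ?C)"
    using compact_Int_closed[OF assms(2) uniform_discrete_imp_closed] discrete_compact_finite_iff
      uniform_discrete_imp_discrete by (metis inf.absorb_iff2)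
  moreover have "inj_on p ?C"
    using p(1) components_eq by (metis inj_onI disjoint_iff)
  ultimately show ?thesis
    using finite_image_iff by blast
qed

section \<open>Cut points\<close>

lemma ncomp_le_deg:
  assumes "connected U" "open V" "x \<in> V" "V \<subseteq> U"
  shows "ncomp (U - {x}) \<le> deg x"
  unfolding deg_def using assms by (intro SUP_upper) auto

lemma cut_point_components_meet_sphere:
  fixes x :: "'a::metric_space"
  assumes "length_space TYPE('a)" "compact (cball x r)" "cut_point r x"
    and "W \<in> components (cball x r - {x})" "0 < \<rho>" "\<rho> \<le> r"
  shows "W \<inter> sphere x \<rho> \<noteq> {}"
proof -
  obtain z where "z \<in> W" "z \<in> sphere x r"
    using assms(3,4) unfolding cut_point_def by blast
  with assms show ?thesis
    by (intro component_punctured_cball_meets_sphere[OF assms(2) length_space_connected_cball])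
      auto
qed

lemma bij_betw_cut_point_components:
  fixes x :: "'a::metric_space"
  assumes LS: "length_space TYPE('a)" and "compact (cball x r)" "cut_point r x" "0 < \<rho>" "\<rho> \<le> r"
  shows "bij_betw (\<lambda>W. W \<inter> (cball x \<rho> - {x}))
           (components (cball x r - {x})) (components (cball x \<rho> - {x}))"
proof (rule bij_betw_components_Int)
  have "finite (components (cball x r - {x}))"
    using finite_components_punctured_cball[OF LS assms(2)] assms(3) by (simp add: cut_point_def)
  moreover have "ncomp (cball x \<rho> - {x}) \<le> deg x"
    using length_space_connected_cball[OF LS] assms(4)
    by (intro ncomp_le_deg[where V = "ball x \<rho>"]) auto
  ultimately have "ncomp (cball x \<rho> - {x}) \<le> enat (card (components (cball x r - {x})))"
    using assms(3) by (simp add: cut_point_def ncomp_def)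
  then show "finite (components (cball x \<rho> - {x}))"
    and "card (components (cball x \<rho> - {x})) \<le> card (components (cball x r - {x}))"
    by (simp_all add: ncomp_def split: if_splits)
  show "cball x \<rho> - {x} \<subseteq> cball x r - {x}"
    using assms(5) by auto
  show "W \<inter> (cball x \<rho> - {x}) \<noteq> {}" if "W \<in> components (cball x r - {x})" for W
    using cut_point_components_meet_sphere[OF LS assms(2,3) that assms(4,5)] assms(4) by auto
qed

lemma cut_point_smaller_radius:
  fixes x :: "'a::metric_space"
  assumes LS: "length_space TYPE('a)" and "compact (cball x r)" "cut_point r x" "0 < \<rho>" "\<rho> \<le> r"
  shows "cut_point \<rho> x"
proof -
  let ?Cr = "components (cball x r - {x})" and ?C\<rho> = "components (cball x \<rho> - {x})"
  have bij: "bij_betw (\<lambda>W. W \<inter> (cball x \<rho> - {x})) ?Cr ?C\<rho>"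
    by (rule bij_betw_cut_point_components[OF assms])
  have fin: "finite ?Cr"
    using finite_components_punctured_cball[OF LS assms(2)] assms(3) by (simp add: cut_point_def)
  with bij have fin\<rho>: "finite ?C\<rho>" and card: "card ?C\<rho> = card ?Cr"
    by (simp_all add: bij_betw_finite bij_betw_same_card)
  have "\<not> connected (cball x \<rho> - {x})"
    using assms(3) fin fin\<rho> card by (simp add: cut_point_def connected_iff_card_components_le_1)
  moreover have "ncomp (cball x \<rho> - {x}) = deg x"
    using assms(3) fin fin\<rho> card by (simp add: cut_point_def ncomp_def)
  moreover have "V \<inter> sphere x \<rho> \<noteq> {}" if "V \<in> ?C\<rho>" for V
  proof -
    have "V \<in> (\<lambda>W. W \<inter> (cball x \<rho> - {x})) ` ?Cr"
      using bij that by (simp add: bij_betw_def)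
    then obtain W where W: "W \<in> ?Cr" "V = W \<inter> (cball x \<rho> - {x})"
      by blast
    obtain p where "p \<in> W" "p \<in> sphere x \<rho>"
      using cut_point_components_meet_sphere[OF LS assms(2,3) W(1) assms(4,5)] by blast
    then show ?thesis
      unfolding W(2) using assms(4) by auto
  qed
  ultimately show ?thesis
    by (simp add: cut_point_def)
qed

lemma cut_point_component_Int_cball:
  fixes x :: "'a::metric_space"
  assumes "length_space TYPE('a)" "compact (cball x r)" "cut_point r x" "0 < \<rho>" "\<rho> \<le> r"
    and "W \<in> components (cball x r - {x})"
  shows "W \<inter> (cball x \<rho> - {x}) \<in> components (cball x \<rho> - {x})"
  using bij_betw_apply[OF bij_betw_cut_point_components[OF assms(1-5)] assms(6)] .

lemma cut_point_sphere_dist_le: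
  fixes x :: "'a::metric_space"
  assumes "length_space TYPE('a)" "compact (cball x r)" "cut_point r x" "0 < \<rho>" "\<rho> \<le> r"
    and "W \<in> components (cball x r - {x})" "p \<in> W" "q \<in> W" "dist x p = \<rho>" "dist x q = \<rho>"
    and bound: "\<And>V. V \<in> components (cball x \<rho> - {x}) \<Longrightarrow> diameter (V \<inter> sphere x \<rho>) \<le> D"
  shows "dist p q \<le> D"
proof -
  let ?V = "W \<inter> (cball x \<rho> - {x})"
  have "p \<in> ?V \<inter> sphere x \<rho>" "q \<in> ?V \<inter> sphere x \<rho>"
    using assms(4,7-10) by auto
  then have "dist p q \<le> diameter (?V \<inter> sphere x \<rho>)"
    by (intro diameter_bounded_bound bounded_subset[OF bounded_cball[of x \<rho>]]) auto
  also have "\<dots> \<le> D"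
    by (rule bound[OF cut_point_component_Int_cball[OF assms(1-6)]])
  finally show ?thesis .
qed

lemma cut_points_component_crosses_sphere:
  fixes x y :: "'a::metric_space"
  assumes LS: "length_space TYPE('a)" and proper: "\<And>(z::'a) t. compact (cball z t)"
    and cut: "cut_point r x" "cut_point r y"
    and W: "W \<in> components (cball x r - {x})" "y \<in> W"
    and \<rho>: "dist x y < \<rho>" "\<rho> + dist x y < r"
    and Q: "Q \<in> components (cball y r - {y})" "x \<notin> Q"
  obtains p where "p \<in> Q \<inter> W" "dist x p = \<rho>"
proof -
  have "y \<in> cball x r - {x}"
    using W in_components_subset by blast
  then have "x \<noteq> y"
    by auto
  have "0 < \<rho>" "\<rho> \<le> r"
    using \<rho> zero_le_dist[of x y] by linarith+
  obtain u where "u \<in> Q" "u \<in> sphere y r"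
    using cut(2) Q(1) unfolding cut_point_def by blast
  then have u: "u \<in> Q" "dist y u = r"
    by simp_all
  have "\<rho> < dist x u"
    using dist_triangle[of y u x] u(2) \<rho>(2) by (simp add: dist_commute)
  then obtain p where p: "p \<in> Q" "dist x p = \<rho>"
    and p_comp: "p \<in> connected_component_set (cball x \<rho> - {x}) y"
    using component_punctured_cball_crosses_sphere[OF proper length_space_connected_cball[OF LS]
        Q(1) u(1) Q(2)] \<open>x \<noteq> y\<close> \<rho>(1) by (metis dist_commute)
  have "W \<inter> (cball x \<rho> - {x}) \<in> components (cball x \<rho> - {x})"
    by (rule cut_point_component_Int_cball[OF LS proper cut(1) \<open>0 < \<rho>\<close> \<open>\<rho> \<le> r\<close> W(1)])
  moreover have "y \<in> W \<inter> (cball x \<rho> - {x})"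
    using W(2) \<rho>(1) \<open>x \<noteq> y\<close> by simp
  ultimately have "p \<in> W"
    using p_comp components_eq_connected_component_set by blast
  with p that show ?thesis
    by blast
qed

lemma component_punctured_cball_contains_close_point:
  fixes x y :: "'a::metric_space"
  assumes LS: "length_space TYPE('a)"
    and "Q \<in> components (cball y r - {y})" "p \<in> Q"
    and "dist x p = r / 2" "dist x q = r / 2" "dist p q + 2 * dist x y < r"
  shows "q \<in> Q"
proof -
  have "dist x p \<le> dist x y + dist y p" "dist x q \<le> dist x y + dist y q"
    "dist y p \<le> dist x y + dist x p" "dist y q \<le> dist x y + dist x q"
    using dist_triangle3[of y p x] dist_triangle3[of y q x] by (simp_all add: dist_triangle)
  with assms(4-6) have "connected_component (cball y r - {y}) p q"
    by (intro length_space_connected_component_punctured_cball[OF LS]) linarith+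
  with assms(2,3) show ?thesis
    using components_eq_connected_component_set by blast
qed

lemma mms_length_space: "mms (\<mu> :: 'a::metric_space measure) \<Longrightarrow> length_space TYPE('a)"
  by (simp add: mms_def)

lemma mms_compact_cball: "mms (\<mu> :: 'a::metric_space measure) \<Longrightarrow> compact (cball (x::'a) r)"
  by (simp add: mms_def length_space_compact_cball)

theorem corollary4p14:
  fixes \<mu> :: "'a::metric_space measure"
    and k n C R \<delta> r :: real and x1 x2 x3 :: 'a and O1' :: "'a set"
  assumes "mms \<mu>" and "BG k n C \<mu>"
    and "n \<ge> 1" and "1 \<le> C" and "C < sqrt 2" and "R > 0"
    and "\<delta> > 0"
    and delta: "\<And>(x::'a) \<rho> W. 0 < \<rho> \<Longrightarrow> \<rho> \<le> R \<Longrightarrow> cut_point \<rho> x \<Longrightarrow>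
                   W \<in> components (cball x \<rho> - {x}) \<Longrightarrow>
                   diameter (W \<inter> sphere x \<rho>) \<le> (2 - \<delta>) * \<rho>"
    and "0 < r" and "r \<le> R"
    and "cut_point r x1" and "cut_point r x2" and "cut_point r x3"
    and "O1' \<in> components (cball x1 r - {x1})" and "x2 \<in> O1'" and "x3 \<in> O1'"
    and "dist x1 x2 < dist x1 x3"
    and "\<forall>a\<in>{x1,x2,x3}. \<forall>b\<in>{x1,x2,x3}. dist a b < \<delta> * r / 6"
  shows "\<forall>O2 O2' O3 O3'.
           O2 \<in> components (cball x2 r - {x2}) \<and> x1 \<in> O2 \<and>
           O2' \<in> components (cball x2 r - {x2}) \<and> O2' \<noteq> O2 \<and>
           O3 \<in> components (cball x3 r - {x3}) \<and> x1 \<in> O3 \<and>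
           O3' \<in> components (cball x3 r - {x3}) \<and> O3' \<noteq> O3
           \<longrightarrow> O2' \<inter> O3' \<noteq> {}"
proof (intro allI impI, elim conjE)
  fix O2 O2' O3 O3'
  assume O2: "O2 \<in> components (cball x2 r - {x2})" "x1 \<in> O2"
    and O2': "O2' \<in> components (cball x2 r - {x2})" "O2' \<noteq> O2"
    and O3: "O3 \<in> components (cball x3 r - {x3})" "x1 \<in> O3"
    and O3': "O3' \<in> components (cball x3 r - {x3})" "O3' \<noteq> O3"
  have LS: "length_space TYPE('a)" and proper: "\<And>(z::'a) t. compact (cball z t)"
    using mms_length_space mms_compact_cball \<open>mms \<mu>\<close> by blast+
  have "0 \<le> diameter (O1' \<inter> sphere x1 r)"
    by (intro diameter_ge_0 bounded_subset[OF bounded_cball[of x1 r]]) auto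
  with delta[OF \<open>0 < r\<close> \<open>r \<le> R\<close> \<open>cut_point r x1\<close> \<open>O1' \<in> _\<close>] \<open>0 < r\<close> have "\<delta> \<le> 2"
    by (smt (verit) zero_le_mult_iff)
  then have d: "dist x1 x2 < \<delta> * r / 6" "\<delta> * r / 6 < r / 2" and "dist x1 x3 < \<delta> * r / 6"
    using assms(18) \<open>0 < r\<close> by auto
  then have d2: "dist x1 x2 < r / 2" "r / 2 + dist x1 x2 < r"
    and d3: "dist x1 x3 < r / 2" "r / 2 + dist x1 x3 < r"
    by linarith+
  have "x1 \<notin> O2'" "x1 \<notin> O3'"
    using components_nonoverlap[OF O2(1) O2'(1)] components_nonoverlap[OF O3(1) O3'(1)]
      O2(2) O2'(2) O3(2) O3'(2) by blast+
  obtain p where p: "p \<in> O2' \<inter> O1'" "dist x1 p = r / 2"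
    using cut_points_component_crosses_sphere[OF LS proper \<open>cut_point r x1\<close> \<open>cut_point r x2\<close>
        \<open>O1' \<in> _\<close> \<open>x2 \<in> O1'\<close> d2 O2'(1) \<open>x1 \<notin> O2'\<close>] by blast
  obtain q where q: "q \<in> O3' \<inter> O1'" "dist x1 q = r / 2"
    using cut_points_component_crosses_sphere[OF LS proper \<open>cut_point r x1\<close> \<open>cut_point r x3\<close>
        \<open>O1' \<in> _\<close> \<open>x3 \<in> O1'\<close> d3 O3'(1) \<open>x1 \<notin> O3'\<close>] by blast
  have "cut_point (r / 2) x1"
    using cut_point_smaller_radius[OF LS proper \<open>cut_point r x1\<close>] \<open>0 < r\<close> by simp
  then have "dist p q \<le> (2 - \<delta>) * (r / 2)"
    using p q \<open>0 < r\<close> \<open>r \<le> R\<close> delta[of "r / 2" x1]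
    by (intro cut_point_sphere_dist_le[OF LS proper \<open>cut_point r x1\<close> _ _ \<open>O1' \<in> _\<close>]) auto
  moreover have "(2 - \<delta>) * (r / 2) + 2 * (\<delta> * r / 6) < r"
    using \<open>\<delta> > 0\<close> \<open>0 < r\<close> by (simp add: field_simps)
  ultimately have "q \<in> O2'"
    using component_punctured_cball_contains_close_point[OF LS O2'(1)] p q d(1) by force
  with q show "O2' \<inter> O3' \<noteq> {}"
    by blast
qed

end
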